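(* Let $S$ be a rectangular domain and $\bar\eta$ a flow field on $\mathbb{E}(\bar S)$. Let $E_{\mathrm{low}}$ be the set of edges $\langle y,y'\rangle$ with $y\in S$, $y'\in\partial\bar S$ and $x(y')=x(y)-1$, and let $E_{\mathrm{up}}$ be the set of such edges with $x(y')=x(y)+1$. Then $$\sum_{e\in E_{\mathrm{low}}}\eta(e)=\sum_{e\in E_{\mathrm{up}}}\eta(e)=\sum_{\ell\in C(S)}w_\eta(\ell).$$
   Context: Lattice and edges. $\tilde{\mathbb{Z}}^2=\{(t,x)\in\mathbb{Z}^2:t+x\text{ even}\}$; edges join points at distance $\sqrt2$; for a point $y=(t,x)$ write $x(y)=x$. Also: - $e^\nearrow_y=\langle(t,x),(t+1,x+1)\rangle$, - $e^\searrow_y=\langle(t,x),(t+1,x-1)\rangle$, - $e^\swarrow_y=\langle(t-1,x-1),(t,x)\rangle$, - $e^\nwarrow_y=\langle(t-1,x+1),(t,x)\rangle$. Domains. A rectangular domain is a nonempty set $S=\{(t,x)\in\tilde{\mathbb{Z}}^2: a\le t+x\le b,\ c\le t-x\le d\}$ with even integers $a\le b$, $c\le d$. $\bar S$ is $S$ together with all points joined by an edge to a point of $S$; $\partial\bar S=\bar S\setminus S$; $\mathbb{E}(\bar S)$ is the set of edges with at least one endpoint in $S$. Flow field. A flow field is $\eta(e)\ge0$, $e\in\mathbb{E}(\bar S)$, with $\eta(e^\nwarrow_y)+\eta(e^\nearrow_y)=\eta(e^\swarrow_y)+\eta(e^\searrow_y)$ for all $y\in S$; $\xi_y=\eta(e^\nearrow_y)\wedge\eta(e^\searrow_y)$.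 Association. For $y\in S$, lower edge $f_1\in\{e^\swarrow_y,e^\searrow_y\}$ with $p_1\in(0,\eta(f_1)]$, and upper edge $f_2\in\{e^\nwarrow_y,e^\nearrow_y\}$ with $p_2\in(0,\eta(f_2)]$, write $(f_1,p_1)\sim_y(f_2,p_2)$ exactly when: - Case 1: $f_1=e^\swarrow_y$, $f_2=e^\nwarrow_y$, $p_1\le\eta(f_1)\wedge\eta(f_2)$, $p_2=p_1$; - Case 2: $f_1=e^\searrow_y$, $f_2=e^\nwarrow_y$, $p_2>\eta(e^\swarrow_y)$, $p_1=p_2-\eta(e^\swarrow_y)$; - Case 3: $f_1=e^\swarrow_y$, $f_2=e^\nearrow_y$, $p_1>\eta(e^\nwarrow_y)$, $p_2=p_1-\eta(e^\nwarrow_y)$; - Case 4: $f_1=e^\searrow_y$, $f_2=e^\nearrow_y$, $p_i>\eta(f_i)-\xi_y$, $\eta(f_1)-p_1=\eta(f_2)-p_2$. Broken traces. A broken trace is $\ell=(y_0,e_1,y_1,\dots,e_n,y_n)$, $n\ge1$, with $e_i=\langle y_{i-1},y_i\rangle$, $x_i=x_{i-1}+1$, $t_i-t_{i-1}\in\{\pm1\}$. $\ell\subseteq\bar S$ means $y_0,y_n\in\bar S$, $y_1,\dots,y_{n-1}\in S$, all $e_i\in\mathbb{E}(\bar S)$. $C(S)$ is the set of $\ell\subseteq\bar S$ with $y_0,y_n\in\partial\bar S$. Weight. $w_\eta(\ell)$ is the Lebesgue measure of the set of $p_1\in(0,\eta(e_1)]$ admitting $p_i\in(0,\eta(e_i)]$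 with $(e_{i-1},p_{i-1})\sim_{y_{i-1}}(e_i,p_i)$ for $i=2,\dots,n$. *)

theory Defs
  imports "HOL-Analysis.Analysis"
begin

text \<open>Points are pairs (t, x) of integers; the first coordinate is time t,
  the second is the space coordinate x.\<close>

type_synonym point = "int \<times> int"

text \<open>An edge is represented canonically as the pair (earlier endpoint, later endpoint).\<close>
type_synonym edge = "point \<times> point"

definition Zt :: "point set" where
  "Zt = {(t, x). even (t + x)}"

definition adj :: "point \<Rightarrow> point \<Rightarrow> bool" where
  "adj p q \<longleftrightarrow> p \<in> Zt \<and> q \<in> Zt \<and> (fst p - fst q)^2 + (snd p - snd q)^2 = 2"

definition mk_edge :: "point \<Rightarrow> point \<Rightarrow> edge" where
  "mk_edge p q = (if fst p \<le> fst q then (p, q) else (q, p))"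

definition e_ne :: "point \<Rightarrow> edge" where
  "e_ne y = (case y of (t, x) \<Rightarrow> ((t, x), (t + 1, x + 1)))"
definition e_se :: "point \<Rightarrow> edge" where
  "e_se y = (case y of (t, x) \<Rightarrow> ((t, x), (t + 1, x - 1)))"
definition e_sw :: "point \<Rightarrow> edge" where
  "e_sw y = (case y of (t, x) \<Rightarrow> ((t - 1, x - 1), (t, x)))"
definition e_nw :: "point \<Rightarrow> edge" where
  "e_nw y = (case y of (t, x) \<Rightarrow> ((t - 1, x + 1), (t, x)))"

definition rect_domain :: "int \<Rightarrow> int \<Rightarrow> int \<Rightarrow> int \<Rightarrow> point set" where
  "rect_domain a b c d =
     {(t, x). (t, x) \<in> Zt \<and> a \<le> t + x \<and> t + x \<le> b \<and> c \<le> t - x \<and> t - x \<le> d}"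

definition is_rect_domain :: "point set \<Rightarrow> bool" where
  "is_rect_domain S \<longleftrightarrow> S \<noteq> {} \<and>
     (\<exists>a b c d. even a \<and> even b \<and> even c \<and> even d \<and> a \<le> b \<and> c \<le> d \<and>
        S = rect_domain a b c d)"

definition clos :: "point set \<Rightarrow> point set" where
  "clos S = S \<union> {q. \<exists>p\<in>S. adj p q}"

definition bdry :: "point set \<Rightarrow> point set" where
  "bdry S = clos S - S"

definition edges_cl :: "point set \<Rightarrow> edge set" where
  "edges_cl S = {mk_edge p q | p q. adj p q \<and> (p \<in> S \<or> q \<in> S)}"

definition flow_field :: "point set \<Rightarrow> (edge \<Rightarrow> real) \<Rightarrow> bool" where
  "flow_field S \<eta> \<longleftrightarrow> (\<forall>e\<in>edges_cl S. 0 \<le> \<eta> e) \<and>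
     (\<forall>y\<in>S. \<eta> (e_nw y) + \<eta> (e_ne y) = \<eta> (e_sw y) + \<eta> (e_se y))"

definition xi :: "(edge \<Rightarrow> real) \<Rightarrow> point \<Rightarrow> real" where
  "xi \<eta> y = min (\<eta> (e_ne y)) (\<eta> (e_se y))"

definition assoc :: "(edge \<Rightarrow> real) \<Rightarrow> point \<Rightarrow> edge \<Rightarrow> real \<Rightarrow> edge \<Rightarrow> real \<Rightarrow> bool" where
  "assoc \<eta> y f1 p1 f2 p2 \<longleftrightarrow>
     f1 \<in> {e_sw y, e_se y} \<and> 0 < p1 \<and> p1 \<le> \<eta> f1 \<and>
     f2 \<in> {e_nw y, e_ne y} \<and> 0 < p2 \<and> p2 \<le> \<eta> f2 \<and>
     ((f1 = e_sw y \<and> f2 = e_nw y \<and> p1 \<le> min (\<eta> f1) (\<eta> f2) \<and> p2 = p1) \<or>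
      (f1 = e_se y \<and> f2 = e_nw y \<and> p2 > \<eta> (e_sw y) \<and> p1 = p2 - \<eta> (e_sw y)) \<or>
      (f1 = e_sw y \<and> f2 = e_ne y \<and> p1 > \<eta> (e_nw y) \<and> p2 = p1 - \<eta> (e_nw y)) \<or>
      (f1 = e_se y \<and> f2 = e_ne y \<and> p1 > \<eta> f1 - xi \<eta> y \<and> p2 > \<eta> f2 - xi \<eta> y \<and>
         \<eta> f1 - p1 = \<eta> f2 - p2))"

text \<open>A broken trace (y_0, ..., y_n) is represented by the list of its points;
  n = length ys - 1, and the i-th edge (1 \<le> i \<le> n) is trace_edge ys i.\<close>

definition trace_edge :: "point list \<Rightarrow> nat \<Rightarrow> edge" where
  "trace_edge ys i = mk_edge (ys ! (i - 1)) (ys ! i)"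

definition broken_trace :: "point list \<Rightarrow> bool" where
  "broken_trace ys \<longleftrightarrow> length ys \<ge> 2 \<and> set ys \<subseteq> Zt \<and>
     (\<forall>i. Suc i < length ys \<longrightarrow>
        snd (ys ! Suc i) = snd (ys ! i) + 1 \<and> \<bar>fst (ys ! Suc i) - fst (ys ! i)\<bar> = 1)"

definition trace_in :: "point set \<Rightarrow> point list \<Rightarrow> bool" where
  "trace_in S ys \<longleftrightarrow> hd ys \<in> clos S \<and> last ys \<in> clos S \<and>
     (\<forall>i. 0 < i \<and> i < length ys - 1 \<longrightarrow> ys ! i \<in> S) \<and>
     (\<forall>i\<in>{1..length ys - 1}. trace_edge ys i \<in> edges_cl S)"

definition C :: "point set \<Rightarrow> point list set" where
  "C S = {ys. broken_trace ys \<and> trace_in S ys \<and> hd ys \<in> bdry S \<and> last ys \<in> bdry S}"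

definition weight :: "(edge \<Rightarrow> real) \<Rightarrow> point list \<Rightarrow> real" where
  "weight \<eta> ys = measure lebesgue
     {p1. 0 < p1 \<and> p1 \<le> \<eta> (trace_edge ys 1) \<and>
        (\<exists>p :: nat \<Rightarrow> real. p 1 = p1 \<and>
           (\<forall>i\<in>{1..length ys - 1}. 0 < p i \<and> p i \<le> \<eta> (trace_edge ys i)) \<and>
           (\<forall>i\<in>{2..length ys - 1}.
              assoc \<eta> (ys ! (i - 1)) (trace_edge ys (i - 1)) (p (i - 1)) (trace_edge ys i) (p i)))}"

definition E_low :: "point set \<Rightarrow> edge set" where
  "E_low S = {mk_edge y y' | y y'. y \<in> S \<and> y' \<in> bdry S \<and> adj y y' \<and> snd y' = snd y - 1}"

definition E_up :: "point set \<Rightarrow> edge set" where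
  "E_up S = {mk_edge y y' | y y'. y \<in> S \<and> y' \<in> bdry S \<and> adj y y' \<and> snd y' = snd y + 1}"

end

theory Submission
  imports Defs
begin

text \<open>
  Of the rectangular domain we only use that it is a finite set of
  lattice points.

  The first equality is a summed conservation law: adding the identity
  \<open>\<eta>(nw) + \<eta>(ne) = \<eta>(sw) + \<eta>(se)\<close> over all points of \<open>S\<close>, every edge inside \<open>S\<close> appears once
  on each side (\<open>boundary_balance\<close>).

  For the second equality, a trace of \<open>C S\<close> is a lower boundary edge \<open>y \<rightarrow> z\<close> followed by an
  up-path escaping from \<open>z\<close> through \<open>S\<close> (\<open>C_iff\<close>).  At each vertex the association relation
  is a translation on an interval (\<open>assoc_translation\<close>), so the admissible levels of a trace form
  an interval computed recursively along the trace (\<open>admissible_Cons\<close>); and the levels of an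
  incoming edge split between the two outgoing edges (\<open>assoc_split\<close>).  By induction on the
  distance to the right end of \<open>clos S\<close> it follows that, within any window of levels, the
  admissible levels of all traces continuing an edge \<open>y \<rightarrow> z\<close> fill exactly the levels
  \<open>(0, \<eta>(y,z)]\<close> of that edge (\<open>conserves_clos\<close>).  Summing over the lower boundary edges gives
  the total weight (\<open>sum_weights_C\<close>).
\<close>

section \<open>Lattice geometry\<close>

lemma sum_squares_eq_2_iff: "(u::int)^2 + v^2 = 2 \<longleftrightarrow> \<bar>u\<bar> = 1 \<and> \<bar>v\<bar> = 1"
proof
  have big: "u^2 \<ge> 4" if "\<bar>u\<bar> \<ge> 2" for u :: int
  proof -
    have "2 * 2 \<le> \<bar>u\<bar> * \<bar>u\<bar>" using that by (intro mult_mono) auto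
    then show ?thesis by (simp add: power2_eq_square abs_mult[symmetric])
  qed
  have small: "\<bar>u\<bar> = 0 \<or> \<bar>u\<bar> = 1 \<or> \<bar>u\<bar> \<ge> 2" for u :: int by linarith
  have sq: "\<bar>u\<bar> = k \<Longrightarrow> u^2 = k^2" for u k :: int by (metis power2_abs)
  assume "u^2 + v^2 = 2"
  then show "\<bar>u\<bar> = 1 \<and> \<bar>v\<bar> = 1"
    using big[of u] big[of v] small[of u] small[of v]
      sq[of u 0] sq[of u 1] sq[of v 0] sq[of v 1] zero_le_power2[of u] zero_le_power2[of v]
    by fastforce
next
  assume "\<bar>u\<bar> = 1 \<and> \<bar>v\<bar> = 1"
  then show "u^2 + v^2 = 2" by (metis power2_abs power_one one_add_one)
qed

lemma adj_iff:
  "adj p q \<longleftrightarrow> p \<in> Zt \<and> q \<in> Zt \<and> \<bar>fst p - fst q\<bar> = 1 \<and> \<bar>snd p - snd q\<bar> = 1"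
  unfolding adj_def using sum_squares_eq_2_iff by blast

lemma adj_sym: "adj p q \<Longrightarrow> adj q p"
  unfolding adj_iff by auto

lemma mk_edge_sym: "adj p q \<Longrightarrow> mk_edge p q = mk_edge q p"
  unfolding mk_edge_def adj_iff by auto

lemma mk_edge_eqD: "mk_edge p q = mk_edge p' q' \<Longrightarrow> (p = p' \<and> q = q') \<or> (p = q' \<and> q = p')"
  unfolding mk_edge_def by (auto split: if_splits)

definition up_step :: "point \<Rightarrow> point \<Rightarrow> bool" where
  "up_step p q \<longleftrightarrow> adj p q \<and> snd q = snd p + 1"

definition upper_nbrs :: "point \<Rightarrow> point set" where
  "upper_nbrs y = {(fst y + 1, snd y + 1), (fst y - 1, snd y + 1)}"

definition lower_nbrs :: "point \<Rightarrow> point set" where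
  "lower_nbrs y = {(fst y - 1, snd y - 1), (fst y + 1, snd y - 1)}"

lemma up_step_Zt: "up_step p q \<Longrightarrow> p \<in> Zt \<and> q \<in> Zt"
  unfolding up_step_def adj_iff by auto

lemma up_step_iff_upper: "p \<in> Zt \<Longrightarrow> up_step p q \<longleftrightarrow> q \<in> upper_nbrs p"
  by (cases p; cases q) (auto simp: up_step_def adj_iff Zt_def upper_nbrs_def abs_eq_iff)

lemma up_step_iff_lower: "q \<in> Zt \<Longrightarrow> up_step p q \<longleftrightarrow> p \<in> lower_nbrs q"
  by (cases p; cases q) (auto simp: up_step_def adj_iff Zt_def lower_nbrs_def abs_eq_iff)

lemma edges_at:
  "mk_edge y (fst y + 1, snd y + 1) = e_ne y"
  "mk_edge y (fst y - 1, snd y + 1) = e_nw y"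
  "mk_edge y (fst y - 1, snd y - 1) = e_sw y"
  "mk_edge y (fst y + 1, snd y - 1) = e_se y"
  by (cases y; simp add: mk_edge_def e_ne_def e_nw_def e_sw_def e_se_def)+

lemma edges_distinct: "e_sw y \<noteq> e_se y" "e_nw y \<noteq> e_ne y"
  by (cases y; simp add: e_ne_def e_nw_def e_sw_def e_se_def)+

lemma sum_upper_nbrs: "(\<Sum>w\<in>upper_nbrs y. \<eta> (mk_edge y w)) = \<eta> (e_ne y) + \<eta> (e_nw y)"
  by (simp add: upper_nbrs_def edges_at)

lemma sum_lower_nbrs: "(\<Sum>w\<in>lower_nbrs y. \<eta> (mk_edge y w)) = \<eta> (e_sw y) + \<eta> (e_se y)"
  by (simp add: lower_nbrs_def edges_at)

lemma clos_eq: "clos S = S \<union> bdry S" and S_bdry_disjoint: "S \<inter> bdry S = {}"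
  unfolding bdry_def clos_def by auto

lemma up_step_clos: "up_step y w \<Longrightarrow> y \<in> S \<or> w \<in> S \<Longrightarrow> y \<in> clos S \<and> w \<in> clos S"
  unfolding clos_def up_step_def using adj_sym by blast

lemma up_step_edges_cl: "up_step y w \<Longrightarrow> y \<in> S \<or> w \<in> S \<Longrightarrow> mk_edge y w \<in> edges_cl S"
  unfolding edges_cl_def up_step_def by blast

lemma finite_clos: assumes "finite S" shows "finite (clos S)"
proof -
  have "clos S \<subseteq> S \<union> (\<Union>p\<in>S. upper_nbrs p \<union> lower_nbrs p)"
    by (auto simp: clos_def adj_iff abs_eq_iff upper_nbrs_def lower_nbrs_def)
  then show ?thesis
    by (rule finite_subset) (use assms in \<open>simp add: upper_nbrs_def lower_nbrs_def\<close>)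
qed

lemma rect_domain_finite_Zt: assumes "is_rect_domain S" shows "finite S" "S \<subseteq> Zt"
proof -
  obtain a b c d where S: "S = rect_domain a b c d"
    using assms unfolding is_rect_domain_def by blast
  define K where "K = \<bar>a\<bar> + \<bar>b\<bar> + \<bar>c\<bar> + \<bar>d\<bar>"
  have "S \<subseteq> {-K..K} \<times> {-K..K}"
    unfolding S rect_domain_def K_def by auto
  then show "finite S" by (rule finite_subset) auto
  show "S \<subseteq> Zt" unfolding S rect_domain_def by auto
qed


section \<open>Balance of the boundary flow\<close>

lemma nbrs_clos:
  assumes "y \<in> S" "y \<in> Zt"
  shows "upper_nbrs y \<subseteq> clos S" "lower_nbrs y \<subseteq> clos S"
  using up_step_clos[of y _ S] up_step_clos[of _ y S] assms
    up_step_iff_upper[OF assms(2)] up_step_iff_lower[OF assms(2)] by blast+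

lemma edges_at_in_edges_cl:
  assumes "z \<in> S" "z \<in> Zt"
  shows "e_ne z \<in> edges_cl S" "e_nw z \<in> edges_cl S" "e_sw z \<in> edges_cl S" "e_se z \<in> edges_cl S"
proof -
  have up: "mk_edge z w \<in> edges_cl S" if "w \<in> upper_nbrs z" for w
    using that assms up_step_iff_upper[OF assms(2)] up_step_edges_cl by blast
  have low: "mk_edge z w \<in> edges_cl S" if "w \<in> lower_nbrs z" for w
  proof -
    have "up_step w z" using that up_step_iff_lower[OF assms(2)] by blast
    then show ?thesis
      using assms(1) up_step_edges_cl[of w z S] mk_edge_sym[of w z] unfolding up_step_def by auto
  qed
  show "e_ne z \<in> edges_cl S" "e_nw z \<in> edges_cl S" "e_sw z \<in> edges_cl S" "e_se z \<in> edges_cl S"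
    using up[of "(fst z + 1, snd z + 1)"] up[of "(fst z - 1, snd z + 1)"]
      low[of "(fst z - 1, snd z - 1)"] low[of "(fst z + 1, snd z - 1)"]
    by (simp_all add: upper_nbrs_def lower_nbrs_def edges_at)
qed

lemma sum_split_clos:
  assumes "finite N" "N \<subseteq> clos S"
  shows "sum g N = sum g (N \<inter> S) + sum g (N \<inter> bdry S)"
proof -
  have "N = (N \<inter> S) \<union> (N \<inter> bdry S)" using assms(2) clos_eq by blast
  then have "sum g N = sum g ((N \<inter> S) \<union> (N \<inter> bdry S))" by simp
  also have "\<dots> = sum g (N \<inter> S) + sum g (N \<inter> bdry S)"
    by (rule sum.union_disjoint) (use assms(1) S_bdry_disjoint[of S] in auto)
  finally show ?thesis .
qed

text \<open>A sum over the edges joining points of \<open>S\<close> to chosen boundary neighbours equals the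
  double sum over the points and their neighbours: two such pairs giving the same edge could
  only differ by swapping the endpoints, which would put a point of \<open>S\<close> on the boundary.\<close>
lemma sum_boundary_edges:
  assumes "finite S" and N: "\<And>y. y \<in> S \<Longrightarrow> finite (N y) \<and> N y \<subseteq> bdry S"
  shows "(\<Sum>e\<in>(\<lambda>(y, w). mk_edge y w) ` (SIGMA y:S. N y). \<eta> e) = (\<Sum>y\<in>S. \<Sum>w\<in>N y. \<eta> (mk_edge y w))"
proof -
  have "inj_on (\<lambda>(y, w). mk_edge y w) (SIGMA y:S. N y)"
    using N S_bdry_disjoint[of S] by (auto simp: inj_on_def dest!: mk_edge_eqD)
  then show ?thesis
    using assms by (simp add: sum.reindex sum.Sigma case_prod_unfold)
qed

lemma image_pairs_Collect: "{f y w | y w. P y w} = (\<lambda>(y, w). f y w) ` {(y, w). P y w}"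
  by auto

lemma E_up_eq:
  assumes "S \<subseteq> Zt"
  shows "E_up S = (\<lambda>(y, w). mk_edge y w) ` (SIGMA y:S. upper_nbrs y \<inter> bdry S)"
proof -
  have "adj y w \<and> snd w = snd y + 1 \<longleftrightarrow> w \<in> upper_nbrs y" if "y \<in> S" for y w
    using up_step_iff_upper[of y w] that assms unfolding up_step_def by blast
  then have "{(y, w). y \<in> S \<and> w \<in> bdry S \<and> adj y w \<and> snd w = snd y + 1}
      = (SIGMA y:S. upper_nbrs y \<inter> bdry S)" by blast
  then show ?thesis
    unfolding E_up_def image_pairs_Collect by simp
qed

lemma E_low_eq:
  assumes "S \<subseteq> Zt"
  shows "E_low S = (\<lambda>(y, w). mk_edge y w) ` (SIGMA y:S. lower_nbrs y \<inter> bdry S)"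
proof -
  have "adj y w \<and> snd w = snd y - 1 \<longleftrightarrow> w \<in> lower_nbrs y" if "y \<in> S" for y w
  proof -
    have "adj y w \<and> snd w = snd y - 1 \<longleftrightarrow> up_step w y"
      unfolding up_step_def using adj_sym[of y w] adj_sym[of w y] by auto
    then show ?thesis using up_step_iff_lower[of y w] that assms by blast
  qed
  then have "{(y, w). y \<in> S \<and> w \<in> bdry S \<and> adj y w \<and> snd w = snd y - 1}
      = (SIGMA y:S. lower_nbrs y \<inter> bdry S)" by blast
  then show ?thesis
    unfolding E_low_def image_pairs_Collect by simp
qed

text \<open>Summing the conservation law over \<open>S\<close>, every edge inside \<open>S\<close> is counted once as
  outgoing and once as incoming, so the boundary flows in and out agree.\<close>
lemma boundary_balance:
  assumes fin: "finite S" and SZ: "S \<subseteq> Zt" and ff: "flow_field S \<eta>"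
  shows "(\<Sum>y\<in>S. \<Sum>w\<in>upper_nbrs y \<inter> bdry S. \<eta> (mk_edge y w))
       = (\<Sum>y\<in>S. \<Sum>w\<in>lower_nbrs y \<inter> bdry S. \<eta> (mk_edge y w))"
proof -
  let ?f = "\<lambda>y w. \<eta> (mk_edge y w)"
  have fin_nbrs: "finite (upper_nbrs y)" "finite (lower_nbrs y)" for y
    by (simp_all add: upper_nbrs_def lower_nbrs_def)
  have up_S: "upper_nbrs y \<inter> S = {w. w \<in> S \<and> up_step y w}" if "y \<in> S" for y
    using up_step_iff_upper[of y] that SZ by auto
  have low_S: "lower_nbrs w \<inter> S = {y. y \<in> S \<and> up_step y w}" if "w \<in> S" for w
    using up_step_iff_lower[of w] that SZ by auto
  have split_up: "sum g (upper_nbrs y) = sum g (upper_nbrs y \<inter> S) + sum g (upper_nbrs y \<inter> bdry S)"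
    and split_low: "sum g (lower_nbrs y) = sum g (lower_nbrs y \<inter> S) + sum g (lower_nbrs y \<inter> bdry S)"
    if "y \<in> S" for y and g :: "point \<Rightarrow> real"
    using that SZ by (intro sum_split_clos fin_nbrs nbrs_clos; auto)+
  have interior: "(\<Sum>y\<in>S. \<Sum>w\<in>upper_nbrs y \<inter> S. ?f y w) = (\<Sum>w\<in>S. \<Sum>y\<in>lower_nbrs w \<inter> S. ?f w y)"
  proof -
    have "(\<Sum>y\<in>S. \<Sum>w\<in>upper_nbrs y \<inter> S. ?f y w) = (\<Sum>y\<in>S. \<Sum>w\<in>{w. w \<in> S \<and> up_step y w}. ?f y w)"
      using up_S by simp
    also have "\<dots> = (\<Sum>w\<in>S. \<Sum>y\<in>{y. y \<in> S \<and> up_step y w}. ?f y w)"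
      using fin by (rule sum.swap_restrict[OF _ fin])
    also have "\<dots> = (\<Sum>w\<in>S. \<Sum>y\<in>lower_nbrs w \<inter> S. ?f w y)"
    proof (intro sum.cong refl)
      fix w y assume "w \<in> S" "y \<in> lower_nbrs w \<inter> S"
      then have "up_step y w" using low_S by blast
      then show "?f y w = ?f w y" unfolding up_step_def by (simp add: mk_edge_sym)
    qed (use low_S in simp)
    finally show ?thesis .
  qed
  have "(\<Sum>y\<in>S. \<Sum>w\<in>upper_nbrs y. ?f y w) = (\<Sum>y\<in>S. \<Sum>w\<in>lower_nbrs y. ?f y w)"
    using ff unfolding flow_field_def sum_upper_nbrs sum_lower_nbrs
    by (auto simp: add.commute intro!: sum.cong)
  moreover have "(\<Sum>y\<in>S. \<Sum>w\<in>upper_nbrs y. ?f y w)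
      = (\<Sum>y\<in>S. \<Sum>w\<in>upper_nbrs y \<inter> S. ?f y w) + (\<Sum>y\<in>S. \<Sum>w\<in>upper_nbrs y \<inter> bdry S. ?f y w)"
    by (simp add: split_up sum.distrib)
  moreover have "(\<Sum>y\<in>S. \<Sum>w\<in>lower_nbrs y. ?f y w)
      = (\<Sum>y\<in>S. \<Sum>w\<in>lower_nbrs y \<inter> S. ?f y w) + (\<Sum>y\<in>S. \<Sum>w\<in>lower_nbrs y \<inter> bdry S. ?f y w)"
    by (simp add: split_low sum.distrib)
  ultimately show ?thesis
    using interior by linarith
qed


section \<open>The association relation at a vertex\<close>

lemma assoc_translation:
  "\<exists>lo hi s. \<forall>p p'. assoc \<eta> y f1 p f2 p' \<longleftrightarrow> lo < p \<and> p \<le> hi \<and> p' = p + s"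
proof -
  note D = edges_distinct[of y]
  consider "f1 = e_sw y" "f2 = e_nw y" | "f1 = e_se y" "f2 = e_nw y" | "f1 = e_sw y" "f2 = e_ne y"
    | "f1 = e_se y" "f2 = e_ne y" | "f1 \<notin> {e_sw y, e_se y} \<or> f2 \<notin> {e_nw y, e_ne y}" by blast
  then show ?thesis
  proof cases
    case 1
    show ?thesis
      by (rule exI[of _ 0], rule exI[of _ "min (\<eta> (e_sw y)) (\<eta> (e_nw y))"], rule exI[of _ 0])
         (use 1 D in \<open>auto simp: assoc_def\<close>)
  next
    case 2
    show ?thesis
      by (rule exI[of _ "max 0 (- \<eta> (e_sw y))"],
          rule exI[of _ "min (\<eta> (e_se y)) (\<eta> (e_nw y) - \<eta> (e_sw y))"], rule exI[of _ "\<eta> (e_sw y)"])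
         (use 2 D in \<open>auto simp: assoc_def\<close>)
  next
    case 3
    show ?thesis
      by (rule exI[of _ "max 0 (\<eta> (e_nw y))"],
          rule exI[of _ "min (\<eta> (e_sw y)) (\<eta> (e_ne y) + \<eta> (e_nw y))"], rule exI[of _ "- \<eta> (e_nw y)"])
         (use 3 D in \<open>auto simp: assoc_def\<close>)
  next
    case 4
    show ?thesis
      by (rule exI[of _ "max 0 (max (\<eta> (e_se y) - xi \<eta> y) (\<eta> (e_se y) - \<eta> (e_ne y)))"],
          rule exI[of _ "\<eta> (e_se y)"], rule exI[of _ "\<eta> (e_ne y) - \<eta> (e_se y)"])
         (use 4 D in \<open>auto simp: assoc_def\<close>)
  next
    case 5
    show ?thesis
      by (rule exI[of _ 0], rule exI[of _ 0], rule exI[of _ 0]) (use 5 D in \<open>auto simp: assoc_def\<close>)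
  qed
qed

lemma assoc_cases:
  "assoc \<eta> y (e_sw y) p (e_nw y) p' \<longleftrightarrow>
     0 < p \<and> p \<le> \<eta> (e_sw y) \<and> p \<le> \<eta> (e_nw y) \<and> p' = p"
  "assoc \<eta> y (e_se y) p (e_nw y) p' \<longleftrightarrow>
     0 < p \<and> p \<le> \<eta> (e_se y) \<and> 0 < p + \<eta> (e_sw y) \<and> p + \<eta> (e_sw y) \<le> \<eta> (e_nw y)
     \<and> p' = p + \<eta> (e_sw y)"
  "assoc \<eta> y (e_sw y) p (e_ne y) p' \<longleftrightarrow>
     0 < p \<and> p \<le> \<eta> (e_sw y) \<and> \<eta> (e_nw y) < p \<and> p - \<eta> (e_nw y) \<le> \<eta> (e_ne y)
     \<and> p' = p - \<eta> (e_nw y)"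
  "assoc \<eta> y (e_se y) p (e_ne y) p' \<longleftrightarrow>
     0 < p \<and> p \<le> \<eta> (e_se y) \<and> 0 < p + (\<eta> (e_ne y) - \<eta> (e_se y)) \<and> \<eta> (e_se y) - xi \<eta> y < p
     \<and> p' = p + (\<eta> (e_ne y) - \<eta> (e_se y))"
  using edges_distinct[of y] by (auto simp: assoc_def)

text \<open>At a vertex where the flow is conserved, the levels \<open>(0, \<eta>(f\<^sub>1)]\<close> of a lower edge split
  at some \<open>m\<close>: the levels up to \<open>m\<close> continue along the north-west edge, the others along the
  north-east edge.  This is what makes the weights of the two continuations add up.\<close>
lemma assoc_split:
  assumes nonneg: "0 \<le> \<eta> (e_sw y)" "0 \<le> \<eta> (e_se y)" "0 \<le> \<eta> (e_nw y)" "0 \<le> \<eta> (e_ne y)"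
    and cons: "\<eta> (e_nw y) + \<eta> (e_ne y) = \<eta> (e_sw y) + \<eta> (e_se y)"
    and f1: "f1 \<in> {e_sw y, e_se y}"
  shows "\<exists>m. 0 \<le> m \<and> m \<le> \<eta> f1
    \<and> (\<forall>p. (\<exists>p'. assoc \<eta> y f1 p (e_nw y) p') \<longleftrightarrow> 0 < p \<and> p \<le> m)
    \<and> (\<forall>p. (\<exists>p'. assoc \<eta> y f1 p (e_ne y) p') \<longleftrightarrow> m < p \<and> p \<le> \<eta> f1)"
  using f1
proof
  assume "f1 = e_sw y"
  then show ?thesis
    by (intro exI[of _ "min (\<eta> (e_sw y)) (\<eta> (e_nw y))"])
       (use nonneg cons edges_distinct[of y] in \<open>auto simp: assoc_cases\<close>)
next
  assume "f1 \<in> {e_se y}"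
  then show ?thesis
    by (intro exI[of _ "max 0 (min (\<eta> (e_se y)) (\<eta> (e_nw y) - \<eta> (e_sw y)))"])
       (use nonneg cons edges_distinct[of y] in \<open>auto simp: assoc_cases xi_def\<close>)
qed

section \<open>Admissible levels of a broken trace\<close>

definition admissible :: "(edge \<Rightarrow> real) \<Rightarrow> point list \<Rightarrow> real \<Rightarrow> bool" where
  "admissible \<eta> ys p1 \<longleftrightarrow> 0 < p1 \<and> p1 \<le> \<eta> (trace_edge ys 1) \<and>
     (\<exists>p :: nat \<Rightarrow> real. p 1 = p1 \<and>
        (\<forall>i\<in>{1..length ys - 1}. 0 < p i \<and> p i \<le> \<eta> (trace_edge ys i)) \<and>
        (\<forall>i\<in>{2..length ys - 1}.
           assoc \<eta> (ys ! (i - 1)) (trace_edge ys (i - 1)) (p (i - 1)) (trace_edge ys i) (p i)))"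

lemma weight_eq: "weight \<eta> ys = measure lebesgue {p. admissible \<eta> ys p}"
  unfolding weight_def admissible_def by simp

lemma sequence_Cons:
  "(\<exists>p. p 1 = a \<and> (\<forall>i\<in>{1..Suc (Suc n)}. B i (p i)) \<and> (\<forall>i\<in>{2..Suc (Suc n)}. A i (p (i - 1)) (p i)))
   \<longleftrightarrow> B 1 a \<and> (\<exists>b. A 2 a b \<and>
        (\<exists>q. q 1 = b \<and> (\<forall>i\<in>{1..Suc n}. B (Suc i) (q i)) \<and> (\<forall>i\<in>{2..Suc n}. A (Suc i) (q (i - 1)) (q i))))"
  (is "?L \<longleftrightarrow> ?R")
proof
  assume ?L
  then obtain p where p: "p 1 = a" "\<forall>i\<in>{1..Suc (Suc n)}. B i (p i)"
    "\<forall>i\<in>{2..Suc (Suc n)}. A i (p (i - 1)) (p i)" by blast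
  have "A (Suc i) (p (Suc (i - 1))) (p (Suc i))" if "i \<in> {2..Suc n}" for i
  proof -
    have "Suc (i - 1) = i" using that by auto
    then show ?thesis using p(3)[rule_format, of "Suc i"] that by simp
  qed
  moreover have "A 2 a (p 2)" using p(1) p(3)[rule_format, of 2] by simp
  ultimately show ?R
    using p(1,2) by (intro conjI exI[of _ "p 2"] exI[of _ "\<lambda>i. p (Suc i)"]) (auto simp: numeral_2_eq_2)
next
  assume ?R
  then obtain q where B1: "B 1 a" and A2: "A 2 a (q 1)" and q: "\<forall>i\<in>{1..Suc n}. B (Suc i) (q i)"
    "\<forall>i\<in>{2..Suc n}. A (Suc i) (q (i - 1)) (q i)" by blast
  define p where "p i = (if i \<le> 1 then a else q (i - 1))" for i
  have "B i (p i)" if "i \<in> {1..Suc (Suc n)}" for i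
    using that B1 q(1) by (cases i) (auto simp: p_def)
  moreover have "A i (p (i - 1)) (p i)" if "i \<in> {2..Suc (Suc n)}" for i
  proof (cases "i = 2")
    case True then show ?thesis using A2 by (simp add: p_def)
  next
    case False
    define j where "j = i - 1"
    have "i = Suc j" "j \<in> {2..Suc n}" using that False by (auto simp: j_def)
    then show ?thesis using q(2) by (auto simp: p_def)
  qed
  ultimately show ?L by (intro exI[of _ p]) (auto simp: p_def)
qed

lemma trace_edge_Cons: "1 \<le> i \<Longrightarrow> trace_edge (y # ys) (Suc i) = trace_edge ys i"
  by (cases i) (auto simp: trace_edge_def)

lemma admissible_two: "admissible \<eta> [y, z] = (\<lambda>p. 0 < p \<and> p \<le> \<eta> (mk_edge y z))"
  unfolding admissible_def fun_eq_iff by (auto simp: trace_edge_def intro!: exI[of _ "\<lambda>_. _"])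

lemma admissible_iff_levels:
  assumes "2 \<le> length ys"
  shows "admissible \<eta> ys p1 \<longleftrightarrow>
     (\<exists>p :: nat \<Rightarrow> real. p 1 = p1 \<and>
        (\<forall>i\<in>{1..length ys - 1}. 0 < p i \<and> p i \<le> \<eta> (trace_edge ys i)) \<and>
        (\<forall>i\<in>{2..length ys - 1}.
           assoc \<eta> (ys ! (i - 1)) (trace_edge ys (i - 1)) (p (i - 1)) (trace_edge ys i) (p i)))"
  using assms unfolding admissible_def by force

lemma admissible_Cons:
  "admissible \<eta> (y # z # w # r) p \<longleftrightarrow> 0 < p \<and> p \<le> \<eta> (mk_edge y z) \<and>
     (\<exists>p'. assoc \<eta> z (mk_edge y z) p (mk_edge z w) p' \<and> admissible \<eta> (z # w # r) p')"
proof -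
  let ?ys = "y # z # w # r" and ?zs = "z # w # r"
  define B where "B ys i x \<longleftrightarrow> 0 < x \<and> x \<le> \<eta> (trace_edge ys i)" for ys i x
  define A where "A ys i x x' \<longleftrightarrow>
    assoc \<eta> (ys ! (i - 1)) (trace_edge ys (i - 1)) x (trace_edge ys i) x'" for ys i x x'
  have shift_B: "B ?ys (Suc i) = B ?zs i" if "1 \<le> i" for i
    using that by (simp add: B_def trace_edge_Cons fun_eq_iff)
  have shift_A: "A ?ys (Suc i) = A ?zs i" if "2 \<le> i" for i
  proof -
    have "?ys ! (Suc i - 1) = ?zs ! (i - 1)" "Suc i - 1 = Suc (i - 1)" using that by (cases i; simp)+
    then show ?thesis
      using that trace_edge_Cons[of "i - 1" y ?zs] trace_edge_Cons[of i y ?zs]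
      by (simp add: A_def fun_eq_iff)
  qed
  have first_edges: "trace_edge ?ys (Suc 0) = mk_edge y z" "trace_edge ?ys 2 = mk_edge z w"
    by (simp_all add: trace_edge_def numeral_2_eq_2)
  have "admissible \<eta> ?ys p \<longleftrightarrow>
     (\<exists>q. q 1 = p \<and> (\<forall>i\<in>{1..Suc (Suc (length r))}. B ?ys i (q i)) \<and>
        (\<forall>i\<in>{2..Suc (Suc (length r))}. A ?ys i (q (i - 1)) (q i)))"
    by (subst admissible_iff_levels) (simp_all add: A_def B_def)
  also have "\<dots> \<longleftrightarrow> B ?ys 1 p \<and> (\<exists>p'. A ?ys 2 p p' \<and>
     (\<exists>q. q 1 = p' \<and> (\<forall>i\<in>{1..Suc (length r)}. B ?ys (Suc i) (q i)) \<and>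
        (\<forall>i\<in>{2..Suc (length r)}. A ?ys (Suc i) (q (i - 1)) (q i))))"
    by (rule sequence_Cons)
  also have "\<dots> \<longleftrightarrow> B ?ys 1 p \<and> (\<exists>p'. A ?ys 2 p p' \<and>
     (\<exists>q. q 1 = p' \<and> (\<forall>i\<in>{1..Suc (length r)}. B ?zs i (q i)) \<and>
        (\<forall>i\<in>{2..Suc (length r)}. A ?zs i (q (i - 1)) (q i))))"
  proof -
    have "(\<forall>i\<in>{1..Suc (length r)}. B ?ys (Suc i) (q i)) \<longleftrightarrow> (\<forall>i\<in>{1..Suc (length r)}. B ?zs i (q i))"
      "(\<forall>i\<in>{2..Suc (length r)}. A ?ys (Suc i) (q (i - 1)) (q i))
       \<longleftrightarrow> (\<forall>i\<in>{2..Suc (length r)}. A ?zs i (q (i - 1)) (q i))" for q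
      using shift_A shift_B by auto
    then show ?thesis by simp
  qed
  also have "\<dots> \<longleftrightarrow> 0 < p \<and> p \<le> \<eta> (mk_edge y z) \<and>
     (\<exists>p'. assoc \<eta> z (mk_edge y z) p (mk_edge z w) p' \<and> admissible \<eta> ?zs p')"
    by (subst admissible_iff_levels) (simp_all add: first_edges A_def B_def)
  finally show ?thesis .
qed


text \<open>The admissible levels of a trace form an interval \<open>(a, b]\<close>: by \<open>admissible_Cons\<close> each step
  intersects with an interval and translates.\<close>
lemma admissible_interval:
  "2 \<le> length ys \<Longrightarrow> \<exists>a b. \<forall>p. admissible \<eta> ys p \<longleftrightarrow> a < p \<and> p \<le> b"
proof (induction ys rule: induct_list012)
  case (3 y z zs)
  show ?case
  proof (cases zs)
    case Nil
    then show ?thesis by (auto simp: admissible_two)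
  next
    case (Cons w r)
    obtain a b where ab: "\<forall>p. admissible \<eta> (z # w # r) p \<longleftrightarrow> a < p \<and> p \<le> b"
      using 3 Cons by auto
    obtain lo hi s where
      tr: "\<forall>p p'. assoc \<eta> z (mk_edge y z) p (mk_edge z w) p' \<longleftrightarrow> lo < p \<and> p \<le> hi \<and> p' = p + s"
      using assoc_translation by blast
    show ?thesis unfolding Cons
      by (rule exI[of _ "max 0 (max lo (a - s))"], rule exI[of _ "min (\<eta> (mk_edge y z)) (min hi (b - s))"])
         (auto simp: admissible_Cons ab tr)
  qed
qed auto

lemma admissible_first_edge: "admissible \<eta> (y # z # r) p \<Longrightarrow> 0 < p \<and> p \<le> \<eta> (mk_edge y z)"
  by (cases r) (auto simp: admissible_two admissible_Cons)

definition level_measure :: "real \<Rightarrow> real \<Rightarrow> (real \<Rightarrow> bool) \<Rightarrow> real" where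
  "level_measure a b P = measure lebesgue {p. a < p \<and> p \<le> b \<and> P p}"

lemma measure_Ioc: "measure lebesgue {p::real. a < p \<and> p \<le> b} = max 0 (b - a)"
proof -
  have Ioc: "{p::real. a < p \<and> p \<le> b} = {a<..b}" by auto
  show ?thesis
  proof (cases "a \<le> b")
    case True
    then show ?thesis unfolding Ioc by (simp add: measure_completion)
  next
    case False
    then have "{a<..b} = {}" by auto
    then show ?thesis unfolding Ioc using False by simp
  qed
qed

lemma level_measure_interval:
  "level_measure a1 b1 (\<lambda>p. a2 < p \<and> p \<le> b2) = max 0 (min b1 b2 - max a1 a2)"
proof -
  have "{p::real. a1 < p \<and> p \<le> b1 \<and> a2 < p \<and> p \<le> b2} = {p. max a1 a2 < p \<and> p \<le> min b1 b2}"
    by auto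
  then show ?thesis unfolding level_measure_def by (simp only: measure_Ioc)
qed

lemma level_measure_shift:
  assumes P: "\<forall>q. P q \<longleftrightarrow> a < q \<and> q \<le> b"
  shows "level_measure \<alpha> \<beta> (\<lambda>p. P (p + s)) = level_measure (\<alpha> + s) (\<beta> + s) P"
proof -
  have "level_measure \<alpha> \<beta> (\<lambda>p. P (p + s)) = level_measure \<alpha> \<beta> (\<lambda>p. a - s < p \<and> p \<le> b - s)"
    unfolding level_measure_def P[rule_format] by (rule arg_cong[where f = "measure _"]) auto
  moreover have "level_measure (\<alpha> + s) (\<beta> + s) P = level_measure (\<alpha> + s) (\<beta> + s) (\<lambda>q. a < q \<and> q \<le> b)"
    unfolding level_measure_def P[rule_format] by simp
  moreover have "min (\<beta> + s) b = min \<beta> (b - s) + s" "max (\<alpha> + s) a = max \<alpha> (a - s) + s"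
    by (auto simp: min_def max_def)
  ultimately show ?thesis by (simp add: level_measure_interval)
qed

text \<open>Suppose that for traces \<open>z # ws\<close>, \<open>ws \<in> W\<close>, all starting with
  the edge from \<open>z\<close> to \<open>w\<close>, the admissible levels fill the levels of that edge, in every window.
  Then prefixing the edge from \<open>y\<close> to \<open>z\<close>, the admissible levels fill, in every window, exactly
  the levels of that edge which are associated at \<open>z\<close> with the edge to \<open>w\<close>: the association is
  a translation, and windows are translated along with it.\<close>
lemma level_measure_through_vertex:
  assumes W: "\<And>ws. ws \<in> W \<Longrightarrow> \<exists>r. ws = w # r"
    and IH: "\<And>\<alpha> \<beta>. (\<Sum>ws\<in>W. level_measure \<alpha> \<beta> (admissible \<eta> (z # ws)))
                     = level_measure \<alpha> \<beta> (\<lambda>p. 0 < p \<and> p \<le> \<eta> (mk_edge z w))"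
  shows "(\<Sum>ws\<in>W. level_measure \<alpha> \<beta> (admissible \<eta> (y # z # ws)))
       = level_measure \<alpha> \<beta> (\<lambda>p. \<exists>p'. assoc \<eta> z (mk_edge y z) p (mk_edge z w) p')"
proof -
  obtain lo hi s where
    tr: "\<forall>p p'. assoc \<eta> z (mk_edge y z) p (mk_edge z w) p' \<longleftrightarrow> lo < p \<and> p \<le> hi \<and> p' = p + s"
    using assoc_translation by blast
  have bounds: "0 < p \<and> p \<le> \<eta> (mk_edge y z) \<and> 0 < p + s \<and> p + s \<le> \<eta> (mk_edge z w)"
    if "lo < p" "p \<le> hi" for p
    using tr that unfolding assoc_def by blast
  define \<alpha>' where "\<alpha>' = max \<alpha> lo"
  define \<beta>' where "\<beta>' = min \<beta> hi"
  have window: "level_measure \<alpha> \<beta> (\<lambda>p. lo < p \<and> p \<le> hi \<and> Q p) = level_measure \<alpha>' \<beta>' Q" for Q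
    unfolding level_measure_def \<alpha>'_def \<beta>'_def by (rule arg_cong[where f = "measure _"]) auto
  have shifted: "level_measure \<alpha> \<beta> (admissible \<eta> (y # z # ws))
      = level_measure (\<alpha>' + s) (\<beta>' + s) (admissible \<eta> (z # ws))" if ws_W: "ws \<in> W" for ws
  proof -
    obtain r where ws: "ws = w # r" using W[OF ws_W] by blast
    obtain a b where ab: "\<forall>q. admissible \<eta> (z # ws) q \<longleftrightarrow> a < q \<and> q \<le> b"
      using admissible_interval[of "z # ws" \<eta>] ws by auto
    have "admissible \<eta> (y # z # ws) = (\<lambda>p. lo < p \<and> p \<le> hi \<and> admissible \<eta> (z # ws) (p + s))"
      unfolding ws fun_eq_iff admissible_Cons using tr bounds by auto
    then have "level_measure \<alpha> \<beta> (admissible \<eta> (y # z # ws))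
        = level_measure \<alpha>' \<beta>' (\<lambda>p. admissible \<eta> (z # ws) (p + s))"
      by (simp add: window[symmetric])
    then show ?thesis using level_measure_shift[OF ab] by simp
  qed
  have "(\<Sum>ws\<in>W. level_measure \<alpha> \<beta> (admissible \<eta> (y # z # ws)))
      = (\<Sum>ws\<in>W. level_measure (\<alpha>' + s) (\<beta>' + s) (admissible \<eta> (z # ws)))"
    using shifted by (rule sum.cong[OF refl])
  also have "\<dots> = level_measure (\<alpha>' + s) (\<beta>' + s) (\<lambda>q. 0 < q \<and> q \<le> \<eta> (mk_edge z w))"
    by (rule IH)
  also have "\<dots> = level_measure \<alpha>' \<beta>' (\<lambda>p. 0 < p + s \<and> p + s \<le> \<eta> (mk_edge z w))"
    by (rule level_measure_shift[where a = 0 and b = "\<eta> (mk_edge z w)", symmetric]) simp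
  also have "\<dots> = level_measure \<alpha> \<beta> (\<lambda>p. lo < p \<and> p \<le> hi \<and> 0 < p + s \<and> p + s \<le> \<eta> (mk_edge z w))"
    by (rule window[symmetric])
  also have "\<dots> = level_measure \<alpha> \<beta> (\<lambda>p. \<exists>p'. assoc \<eta> z (mk_edge y z) p (mk_edge z w) p')"
    by (rule arg_cong[where f = "level_measure \<alpha> \<beta>"]) (use tr bounds in auto)
  finally show ?thesis .
qed


section \<open>Broken traces as escaping up-paths\<close>

text \<open>Every trace of \<open>C(S)\<close> is a boundary point followed by such a path.\<close>
fun escapes :: "point set \<Rightarrow> point list \<Rightarrow> bool" where
  "escapes S [] = False"
| "escapes S [z] = (z \<in> bdry S)"
| "escapes S (z # w # r) = (z \<in> S \<and> up_step z w \<and> escapes S (w # r))"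

lemma all_Suc_less_Cons:
  "(\<forall>i. Suc i < length (a # l) \<longrightarrow> P i) \<longleftrightarrow> (l \<noteq> [] \<longrightarrow> P 0) \<and> (\<forall>j. Suc j < length l \<longrightarrow> P (Suc j))"
  by (cases l) (auto simp: less_Suc_eq_0_disj)

lemma escapes_iff:
  "escapes S ws \<longleftrightarrow> ws \<noteq> [] \<and> last ws \<in> bdry S \<and>
     (\<forall>i. Suc i < length ws \<longrightarrow> ws ! i \<in> S \<and> up_step (ws ! i) (ws ! Suc i))"
proof (induction S ws rule: escapes.induct)
  case (3 S z w r)
  then show ?case by (subst all_Suc_less_Cons) auto
qed auto

lemma broken_trace_iff:
  "broken_trace ys \<longleftrightarrow> 2 \<le> length ys \<and> (\<forall>i. Suc i < length ys \<longrightarrow> up_step (ys ! i) (ys ! Suc i))"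
proof
  assume bt: "broken_trace ys"
  have "up_step (ys ! i) (ys ! Suc i)" if "Suc i < length ys" for i
  proof -
    have "ys ! i \<in> Zt" "ys ! Suc i \<in> Zt"
      using bt that nth_mem[of i ys] nth_mem[of "Suc i" ys] unfolding broken_trace_def by auto
    then show ?thesis using bt that unfolding broken_trace_def up_step_def adj_iff by auto
  qed
  then show "2 \<le> length ys \<and> (\<forall>i. Suc i < length ys \<longrightarrow> up_step (ys ! i) (ys ! Suc i))"
    using bt unfolding broken_trace_def by blast
next
  assume steps: "2 \<le> length ys \<and> (\<forall>i. Suc i < length ys \<longrightarrow> up_step (ys ! i) (ys ! Suc i))"
  have "ys ! k \<in> Zt" if "k < length ys" for k
  proof (cases k)
    case 0 then show ?thesis using steps up_step_Zt[of "ys ! 0" "ys ! 1"] by auto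
  next
    case (Suc j) then show ?thesis using steps that up_step_Zt[of "ys ! j" "ys ! k"] by auto
  qed
  then have "set ys \<subseteq> Zt" by (metis in_set_conv_nth subsetI)
  then show "broken_trace ys"
    using steps unfolding broken_trace_def up_step_def adj_iff by auto
qed

text \<open>An edge between two boundary points does not belong to \<open>edges_cl S\<close>; hence a trace of
  \<open>C S\<close> has at least three points.\<close>
lemma edge_not_in_edges_cl:
  assumes "p \<in> bdry S" "q \<in> bdry S" shows "mk_edge p q \<notin> edges_cl S"
  using assms S_bdry_disjoint[of S] unfolding edges_cl_def by (auto dest!: mk_edge_eqD)

lemma C_iff_indices:
  "ys \<in> C S \<longleftrightarrow> 3 \<le> length ys \<and> hd ys \<in> bdry S \<and> last ys \<in> bdry S \<and>
     (\<forall>i. Suc i < length ys \<longrightarrow> up_step (ys ! i) (ys ! Suc i)) \<and>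
     (\<forall>i. 0 < i \<and> i < length ys - 1 \<longrightarrow> ys ! i \<in> S)"
  (is "_ \<longleftrightarrow> ?R")
proof
  assume C: "ys \<in> C S"
  then have len: "2 \<le> length ys" and edges: "\<forall>i\<in>{1..length ys - 1}. trace_edge ys i \<in> edges_cl S"
    and ends: "hd ys \<in> bdry S" "last ys \<in> bdry S"
    unfolding C_def broken_trace_def trace_in_def by auto
  have "length ys \<noteq> 2"
  proof
    assume "length ys = 2"
    then have "trace_edge ys 1 = mk_edge (hd ys) (last ys)"
      by (cases ys) (auto simp: trace_edge_def last_conv_nth)
    then show False
      using edges \<open>length ys = 2\<close> edge_not_in_edges_cl[OF ends] by simp
  qed
  then show ?R using C len unfolding C_def broken_trace_iff trace_in_def by auto
next
  assume R: ?R
  have "trace_edge ys i \<in> edges_cl S" if "i \<in> {1..length ys - 1}" for i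
  proof -
    have "ys ! (i - 1) \<in> S \<or> ys ! i \<in> S" using R that by (cases "i = 1") auto
    moreover have "up_step (ys ! (i - 1)) (ys ! i)"
    proof -
      have "Suc (i - 1) < length ys" "Suc (i - 1) = i" using that by auto
      then show ?thesis using R by metis
    qed
    ultimately show ?thesis unfolding trace_edge_def using up_step_edges_cl by metis
  qed
  then show "ys \<in> C S" using R unfolding C_def broken_trace_iff trace_in_def clos_eq by auto
qed

lemma C_iff:
  "ys \<in> C S \<longleftrightarrow> (\<exists>y ws. ys = y # ws \<and> y \<in> bdry S \<and> ws \<noteq> [] \<and> hd ws \<in> S \<and>
     up_step y (hd ws) \<and> escapes S ws)"
proof (cases ys)
  case Nil then show ?thesis by (simp add: C_iff_indices)
next
  case (Cons y ws)
  let ?inside = "\<forall>i. Suc i < length ws \<longrightarrow> ws ! i \<in> S"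
  let ?steps = "\<forall>i. Suc i < length ws \<longrightarrow> up_step (ws ! i) (ws ! Suc i)"
  have long: "2 \<le> length ws \<and> ?inside \<longleftrightarrow> ws \<noteq> [] \<and> hd ws \<in> S \<and> ?inside"
    if "last ws \<in> bdry S"
  proof
    assume "ws \<noteq> [] \<and> hd ws \<in> S \<and> ?inside"
    moreover have "length ws \<noteq> 1"
    proof
      assume "length ws = 1"
      then have "hd ws = last ws" by (cases ws) auto
      then show False using that calculation S_bdry_disjoint[of S] by auto
    qed
    ultimately show "2 \<le> length ws \<and> ?inside"
      by (cases ws) (auto simp: Suc_le_eq)
  next
    assume long: "2 \<le> length ws \<and> ?inside"
    then have "ws \<noteq> []" "ws ! 0 \<in> S" by auto
    with long show "ws \<noteq> [] \<and> hd ws \<in> S \<and> ?inside"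
      by (simp add: hd_conv_nth)
  qed
  have steps: "(\<forall>i. Suc i < length ys \<longrightarrow> up_step (ys ! i) (ys ! Suc i))
    \<longleftrightarrow> (ws \<noteq> [] \<longrightarrow> up_step y (hd ws)) \<and> ?steps"
    unfolding Cons all_Suc_less_Cons by (simp add: hd_conv_nth)
  have inside: "(\<forall>i. 0 < i \<and> i < length ys - 1 \<longrightarrow> ys ! i \<in> S) \<longleftrightarrow> ?inside"
    unfolding Cons by (auto simp: gr0_conv_Suc)
  show ?thesis
    unfolding C_iff_indices steps inside escapes_iff using long by (auto simp: Cons)
qed


section \<open>Conservation of mass along escaping paths\<close>

definition escapes_from :: "point set \<Rightarrow> point \<Rightarrow> point list set" where
  "escapes_from S z = {ws. ws \<noteq> [] \<and> hd ws = z \<and> escapes S ws}"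

lemma escapes_from_Cons: "ws \<in> escapes_from S z \<Longrightarrow> \<exists>r. ws = z # r"
  unfolding escapes_from_def by (cases ws) auto

lemma escapes_from_bdry:
  assumes "z \<in> bdry S" shows "escapes_from S z = {[z]}"
proof -
  have single: "escapes S (z # r) \<Longrightarrow> r = []" for r
    using assms S_bdry_disjoint[of S] by (cases r) auto
  show ?thesis
  proof (intro equalityI subsetI)
    fix ws assume "ws \<in> escapes_from S z"
    then obtain r where "ws = z # r" "escapes S (z # r)"
      unfolding escapes_from_def by (cases ws) auto
    then show "ws \<in> {[z]}" using single by simp
  qed (simp add: escapes_from_def assms)
qed

lemma escapes_from_inside:
  assumes "z \<in> S" "z \<in> Zt"
  shows "escapes_from S z = Cons z ` (\<Union>w\<in>upper_nbrs z. escapes_from S w)"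
proof (intro equalityI subsetI)
  fix ws assume ws: "ws \<in> escapes_from S z"
  then obtain r where r: "ws = z # r" "escapes S (z # r)"
    unfolding escapes_from_def by (cases ws) auto
  then obtain w r' where "r = w # r'" "up_step z w" "escapes S (w # r')"
    using assms(1) S_bdry_disjoint[of S] by (cases r) auto
  then show "ws \<in> Cons z ` (\<Union>w\<in>upper_nbrs z. escapes_from S w)"
    using r up_step_iff_upper[OF assms(2)] unfolding escapes_from_def by auto
next
  fix ws assume "ws \<in> Cons z ` (\<Union>w\<in>upper_nbrs z. escapes_from S w)"
  then obtain w r' where "ws = z # w # r'" "w \<in> upper_nbrs z" "escapes S (w # r')"
    unfolding escapes_from_def by (auto simp: neq_Nil_conv)
  then show "ws \<in> escapes_from S z"
    using assms up_step_iff_upper[OF assms(2)] unfolding escapes_from_def by simp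
qed

text \<open>Windows are needed to make the statement inductive.\<close>
definition conserves :: "point set \<Rightarrow> (edge \<Rightarrow> real) \<Rightarrow> point \<Rightarrow> bool" where
  "conserves S \<eta> z \<longleftrightarrow> finite (escapes_from S z) \<and>
     (\<forall>y \<alpha> \<beta>. up_step y z \<longrightarrow>
        (\<Sum>ws\<in>escapes_from S z. level_measure \<alpha> \<beta> (admissible \<eta> (y # ws)))
          = level_measure \<alpha> \<beta> (\<lambda>p. 0 < p \<and> p \<le> \<eta> (mk_edge y z)))"

lemma conserves_bdry: "z \<in> bdry S \<Longrightarrow> conserves S \<eta> z"
  unfolding conserves_def by (simp add: escapes_from_bdry admissible_two)

lemma level_measure_split:
  assumes "0 \<le> m" "m \<le> E"
  shows "level_measure \<alpha> \<beta> (\<lambda>p. m < p \<and> p \<le> E) + level_measure \<alpha> \<beta> (\<lambda>p. 0 < p \<and> p \<le> m)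
       = level_measure \<alpha> \<beta> (\<lambda>p. 0 < p \<and> p \<le> E)"
  using assms by (simp add: level_measure_interval max_def min_def)

text \<open>The induction step: conservation at both upper neighbours of a point of \<open>S\<close> gives
  conservation at the point, because there the levels of the incoming edge split between the two
  outgoing edges (\<open>assoc_split\<close>) and each part is transported by \<open>level_measure_through_vertex\<close>.\<close>
lemma conserves_inside:
  assumes z: "z \<in> S" "z \<in> Zt" and ff: "flow_field S \<eta>"
    and ne: "conserves S \<eta> (fst z + 1, snd z + 1)" and nw: "conserves S \<eta> (fst z - 1, snd z + 1)"
  shows "conserves S \<eta> z"
proof -
  define w1 where "w1 = (fst z + 1, snd z + 1)"
  define w2 where "w2 = (fst z - 1, snd z + 1)"
  let ?G = "escapes_from S"
  have G: "?G z = Cons z ` (?G w1 \<union> ?G w2)"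
    using escapes_from_inside[OF z] unfolding w1_def w2_def upper_nbrs_def by simp
  have disj: "?G w1 \<inter> ?G w2 = {}"
    unfolding w1_def w2_def escapes_from_def by auto
  have fin: "finite (?G w1)" "finite (?G w2)" using ne nw unfolding conserves_def w1_def w2_def by auto
  have edges: "mk_edge z w1 = e_ne z" "mk_edge z w2 = e_nw z" unfolding w1_def w2_def by (rule edges_at)+
  have steps: "up_step z w1" "up_step z w2"
    using up_step_iff_upper[OF z(2)] unfolding w1_def w2_def upper_nbrs_def by auto
  have nonneg: "0 \<le> \<eta> (e_sw z)" "0 \<le> \<eta> (e_se z)" "0 \<le> \<eta> (e_nw z)" "0 \<le> \<eta> (e_ne z)"
    and cons: "\<eta> (e_nw z) + \<eta> (e_ne z) = \<eta> (e_sw z) + \<eta> (e_se z)"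
    using ff edges_at_in_edges_cl[OF z] z(1) unfolding flow_field_def by auto
  have "(\<Sum>ws\<in>?G z. level_measure \<alpha> \<beta> (admissible \<eta> (y # ws)))
      = level_measure \<alpha> \<beta> (\<lambda>p. 0 < p \<and> p \<le> \<eta> (mk_edge y z))" if yz: "up_step y z" for y \<alpha> \<beta>
  proof -
    define e where "e = mk_edge y z"
    have y: "y \<in> lower_nbrs z" "adj y z"
      using yz up_step_iff_lower[OF z(2)] unfolding up_step_def by blast+
    then have "e = mk_edge z y" unfolding e_def using mk_edge_sym by blast
    then have "e \<in> {e_sw z, e_se z}"
      using y(1) by (auto simp: lower_nbrs_def edges_at)
    then obtain m where m: "0 \<le> m" "m \<le> \<eta> e"
      and to_nw: "\<And>p. (\<exists>p'. assoc \<eta> z e p (e_nw z) p') \<longleftrightarrow> 0 < p \<and> p \<le> m"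
      and to_ne: "\<And>p. (\<exists>p'. assoc \<eta> z e p (e_ne z) p') \<longleftrightarrow> m < p \<and> p \<le> \<eta> e"
      using assoc_split[OF nonneg cons] by blast
    have through: "(\<Sum>ws\<in>?G w. level_measure \<alpha> \<beta> (admissible \<eta> (y # z # ws)))
        = level_measure \<alpha> \<beta> (\<lambda>p. \<exists>p'. assoc \<eta> z e p (mk_edge z w) p')"
      if cw: "conserves S \<eta> w" and zw: "up_step z w" for w
      unfolding e_def
    proof (rule level_measure_through_vertex)
      show "\<exists>r. ws = w # r" if "ws \<in> ?G w" for ws using that by (rule escapes_from_Cons)
      show "(\<Sum>ws\<in>?G w. level_measure \<alpha>' \<beta>' (admissible \<eta> (z # ws)))
        = level_measure \<alpha>' \<beta>' (\<lambda>p. 0 < p \<and> p \<le> \<eta> (mk_edge z w))" for \<alpha>' \<beta>'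
        using cw zw unfolding conserves_def by blast
    qed
    have "(\<Sum>ws\<in>?G z. level_measure \<alpha> \<beta> (admissible \<eta> (y # ws)))
        = (\<Sum>ws\<in>?G w1. level_measure \<alpha> \<beta> (admissible \<eta> (y # z # ws)))
          + (\<Sum>ws\<in>?G w2. level_measure \<alpha> \<beta> (admissible \<eta> (y # z # ws)))"
      unfolding G by (simp add: sum.reindex sum.union_disjoint[OF fin disj])
    also have "\<dots> = level_measure \<alpha> \<beta> (\<lambda>p. m < p \<and> p \<le> \<eta> e) + level_measure \<alpha> \<beta> (\<lambda>p. 0 < p \<and> p \<le> m)"
      using through[OF ne[folded w1_def] steps(1)] through[OF nw[folded w2_def] steps(2)]
      by (simp add: edges to_ne to_nw)
    also have "\<dots> = level_measure \<alpha> \<beta> (\<lambda>p. 0 < p \<and> p \<le> \<eta> e)"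
      by (rule level_measure_split[OF m])
    finally show ?thesis unfolding e_def .
  qed
  then show ?thesis
    unfolding conserves_def using G fin by simp
qed

text \<open>Conservation holds at every point of \<open>clos S\<close>, by induction on the distance to the
  rightmost column: paths only move right, so they escape after finitely many steps.\<close>
lemma conserves_clos:
  assumes fin: "finite S" and SZ: "S \<subseteq> Zt" and ff: "flow_field S \<eta>"
  shows "z \<in> clos S \<Longrightarrow> conserves S \<eta> z"
proof (induction z rule: measure_induct_rule[where f = "\<lambda>z. nat (Max (snd ` clos S) - snd z)"])
  case (less z)
  have top: "snd q \<le> Max (snd ` clos S)" if "q \<in> clos S" for q
    using finite_clos[OF fin] that by auto
  consider "z \<in> bdry S" | "z \<in> S" using less.prems clos_eq by blast
  then show ?case
  proof cases
    case 1
    then show ?thesis by (rule conserves_bdry)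
  next
    case 2
    with SZ have zZ: "z \<in> Zt" by blast
    have "conserves S \<eta> w" if "w \<in> upper_nbrs z" for w
    proof (rule less.IH)
      show "w \<in> clos S" using nbrs_clos[OF 2 zZ] that by blast
      then show "nat (Max (snd ` clos S) - snd w) < nat (Max (snd ` clos S) - snd z)"
        using top that unfolding upper_nbrs_def by fastforce
    qed
    then show ?thesis
      using conserves_inside[OF 2 zZ ff] unfolding upper_nbrs_def by blast
  qed
qed

text \<open>Each trace of \<open>C(S)\<close> is a lower boundary edge followed by an escaping path, so the total
  weight is the sum over lower boundary edges of the conserved mass, which is the flow through
  the edge.\<close>
lemma C_decomposition:
  assumes "S \<subseteq> Zt"
  shows "C S = (\<lambda>(z, y, ws). y # ws) ` (SIGMA z:S. (lower_nbrs z \<inter> bdry S) \<times> escapes_from S z)"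
proof -
  have "ys \<in> C S \<longleftrightarrow>
    (\<exists>z y ws. ys = y # ws \<and> z \<in> S \<and> y \<in> lower_nbrs z \<inter> bdry S \<and> ws \<in> escapes_from S z)" for ys
    unfolding C_iff escapes_from_def using up_step_iff_lower assms by blast
  then show ?thesis by (auto simp: image_iff) blast+
qed

lemma sum_weights_escaping:
  assumes fin: "finite S" and SZ: "S \<subseteq> Zt" and ff: "flow_field S \<eta>"
    and z: "z \<in> S" and y: "y \<in> lower_nbrs z"
  shows "(\<Sum>ws\<in>escapes_from S z. weight \<eta> (y # ws)) = \<eta> (mk_edge z y)"
proof -
  define E where "E = \<eta> (mk_edge y z)"
  have step: "up_step y z" using y z SZ up_step_iff_lower by blast
  then have "0 \<le> E" and E: "E = \<eta> (mk_edge z y)"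
    using ff z up_step_edges_cl[of y z S] mk_edge_sym[of y z]
    unfolding E_def flow_field_def up_step_def by auto
  have "weight \<eta> (y # ws) = level_measure 0 E (admissible \<eta> (y # ws))"
    if ws: "ws \<in> escapes_from S z" for ws
  proof -
    obtain r where "ws = z # r" using escapes_from_Cons[OF ws] by blast
    then have "admissible \<eta> (y # ws) p \<Longrightarrow> 0 < p \<and> p \<le> E" for p
      using admissible_first_edge unfolding E_def by blast
    then show ?thesis
      unfolding weight_eq level_measure_def by (intro arg_cong[where f = "measure lebesgue"]) auto
  qed
  then have "(\<Sum>ws\<in>escapes_from S z. weight \<eta> (y # ws))
      = (\<Sum>ws\<in>escapes_from S z. level_measure 0 E (admissible \<eta> (y # ws)))" by simp
  also have "\<dots> = level_measure 0 E (\<lambda>p. 0 < p \<and> p \<le> E)"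
    using conserves_clos[OF fin SZ ff, of z] z step unfolding conserves_def clos_def E_def by blast
  also have "\<dots> = \<eta> (mk_edge z y)"
    using \<open>0 \<le> E\<close> E by (simp add: level_measure_interval)
  finally show ?thesis .
qed

lemma sum_weights_C:
  assumes fin: "finite S" and SZ: "S \<subseteq> Zt" and ff: "flow_field S \<eta>"
  shows "(\<Sum>l\<in>C S. weight \<eta> l) = (\<Sum>z\<in>S. \<Sum>y\<in>lower_nbrs z \<inter> bdry S. \<eta> (mk_edge z y))"
proof -
  let ?I = "SIGMA z:S. (lower_nbrs z \<inter> bdry S) \<times> escapes_from S z"
  have fin_G: "finite (escapes_from S z)" if "z \<in> S" for z
    using conserves_clos[OF fin SZ ff, of z] that unfolding conserves_def clos_def by blast
  have "inj_on (\<lambda>(z, y, ws). y # ws) ?I"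
    by (auto simp: inj_on_def escapes_from_def)
  then have "(\<Sum>l\<in>C S. weight \<eta> l) = (\<Sum>(z, y, ws)\<in>?I. weight \<eta> (y # ws))"
    by (simp add: C_decomposition[OF SZ] sum.reindex case_prod_unfold)
  also have "\<dots> = (\<Sum>z\<in>S. \<Sum>(y, ws)\<in>(lower_nbrs z \<inter> bdry S) \<times> escapes_from S z. weight \<eta> (y # ws))"
    using fin fin_G by (subst sum.Sigma) (auto simp: lower_nbrs_def)
  also have "\<dots> = (\<Sum>z\<in>S. \<Sum>y\<in>lower_nbrs z \<inter> bdry S. \<Sum>ws\<in>escapes_from S z. weight \<eta> (y # ws))"
    by (simp add: sum.cartesian_product)
  also have "\<dots> = (\<Sum>z\<in>S. \<Sum>y\<in>lower_nbrs z \<inter> bdry S. \<eta> (mk_edge z y))"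
    using sum_weights_escaping[OF fin SZ ff] by simp
  finally show ?thesis .
qed

theorem mainTheorem10:
  fixes S :: "point set" and \<eta> :: "edge \<Rightarrow> real"
  assumes "is_rect_domain S"
    and "flow_field S \<eta>"
  shows "(\<Sum>e\<in>E_low S. \<eta> e) = (\<Sum>e\<in>E_up S. \<eta> e) \<and>
         (\<Sum>e\<in>E_up S. \<eta> e) = (\<Sum>l\<in>C S. weight \<eta> l)"
proof -
  note fin = rect_domain_finite_Zt(1)[OF assms(1)] and SZ = rect_domain_finite_Zt(2)[OF assms(1)]
  have low: "(\<Sum>e\<in>E_low S. \<eta> e) = (\<Sum>z\<in>S. \<Sum>y\<in>lower_nbrs z \<inter> bdry S. \<eta> (mk_edge z y))"
    unfolding E_low_eq[OF SZ] by (rule sum_boundary_edges[OF fin]) (simp add: lower_nbrs_def)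
  have up: "(\<Sum>e\<in>E_up S. \<eta> e) = (\<Sum>z\<in>S. \<Sum>w\<in>upper_nbrs z \<inter> bdry S. \<eta> (mk_edge z w))"
    unfolding E_up_eq[OF SZ] by (rule sum_boundary_edges[OF fin]) (simp add: upper_nbrs_def)
  show ?thesis
    using low up boundary_balance[OF fin SZ assms(2)] sum_weights_C[OF fin SZ assms(2)] by simp
qed

end
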